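(* Let $\mathcal{R}$ be a ring and $(\mathcal{C}^{\bullet},\partial)$ a bigraded cochain complex of $\mathcal{R}$-modules as in the context. Then there exists a well-defined $\mathcal{R}$-linear map $\rho_{k}:\mathcal{A}^{k}\to H^{k+1}(\mathcal{N}_{0},\overline{\partial})$ given by \[ \rho_{k}(\xi):=[\partial_{2,-1}\xi_{k-1,1}+\partial_{1,0}\eta_{k,0}], \] where $\eta\in\mathcal{C}^{k}$ is any element with $\pi_{1}\eta=\xi$ and $\pi_{1}(\partial\eta)=0$ (the class being independent of this choice). Moreover, $\mathcal{Z}^{k}_{1}=\ker(\rho_{k})$.
   Context: Setting: $\mathcal{C}^{k}=\bigoplus_{p+q=k}\mathcal{C}^{p,q}$ with $\mathcal{C}^{p,q}=\{0\}$ if $p<0$ or $q<0$; $\partial$ is $\mathcal{R}$-linear of degree $1$, $\partial^{2}=0$, $\partial=\partial_{2,-1}+\partial_{1,0}+\partial_{0,1}$ with $\partial_{i,j}(\mathcal{C}^{p,q})\subseteq\mathcal{C}^{p+i,q+j}$. For $\eta\in\mathcal{C}^k$, $\eta_{p,q}$ is its $\mathcal{C}^{p,q}$-component. $G^{q}\mathcal{C}:=\bigoplus_{j\geq q}\mathcal{C}^{i,j}$, $\pi_{q}:\mathcal{C}\to G^{q}\mathcal{C}$ the projection along the bigrading. $\mathcal{N}^{p,q}:=\ker(\partial_{0,1}|_{\mathcal{C}^{p,q}})\cap\ker(\partial_{2,-1}|_{\mathcal{C}^{p,q}})$, $\mathcal{N}_{q}:=\bigoplus_{p}\mathcal{N}^{p-q,q}$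 (degree-$m$ part $\mathcal{N}^{m-q,q}$), a subcomplex with differential $\overline{\partial}:=\partial|_{\mathcal{N}_q}$; in particular $\mathcal{N}_0$ consists of the $\partial_{0,1}$-closed elements of $\mathcal{C}^{\bullet,0}$. $\mathcal{A}^{k}:=\{\pi_{1}(\eta)\mid\eta\in\mathcal{C}^{k},\ \pi_{1}(\partial\eta)=0\}$. $\mathcal{M}^{k}:=\{\eta\in\mathcal{C}^{k}\mid(\partial\eta)_{i,j}\in B^{k+1}(\mathcal{N}_{j},\overline{\partial})\ \forall\, i+j=k+1\}$ and $\mathcal{Z}^{k}_{1}:=\{\pi_{1}(\eta)\mid\eta\in\mathcal{M}^{k},\ \pi_{1}(\partial\eta)=0\}$. *)

theory Defs
  imports Main
begin

text \<open>
  All modules C^{p,q} are realised as R-submodules (carrier sets C p q) of one ambient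
  left R-module 'm with scalar multiplication sm.  An element of the total degree-k
  space C^k = (direct sum over p+q=k of C^{p,q}) is a function eta :: nat => 'm with
  eta p the (p,k-p)-component, eta p in C p (k-p) for p <= k and eta p = 0 for p > k.
  The three components of the differential are given by maps indexed by the source
  bidegree: d21 p q : C^{p,q} -> C^{p+2,q-1}, d10 p q : C^{p,q} -> C^{p+1,q},
  d01 p q : C^{p,q} -> C^{p,q+1}.
\<close>

definition lmodule :: "('r::ring_1 \<Rightarrow> 'm::ab_group_add \<Rightarrow> 'm) \<Rightarrow> bool" where
  "lmodule sm \<longleftrightarrow>
     (\<forall>a x y. sm a (x + y) = sm a x + sm a y) \<and>
     (\<forall>a b x. sm (a + b) x = sm a x + sm b x) \<and>
     (\<forall>a b x. sm (a * b) x = sm a (sm b x)) \<and>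
     (\<forall>x. sm 1 x = x)"

definition submodule :: "('r::ring_1 \<Rightarrow> 'm::ab_group_add \<Rightarrow> 'm) \<Rightarrow> 'm set \<Rightarrow> bool" where
  "submodule sm S \<longleftrightarrow> 0 \<in> S \<and> (\<forall>x\<in>S. \<forall>y\<in>S. x + y \<in> S) \<and>
     (\<forall>x\<in>S. - x \<in> S) \<and> (\<forall>a. \<forall>x\<in>S. sm a x \<in> S)"

definition linear_on :: "('r::ring_1 \<Rightarrow> 'm::ab_group_add \<Rightarrow> 'm) \<Rightarrow> 'm set \<Rightarrow> ('m \<Rightarrow> 'm) \<Rightarrow> bool" where
  "linear_on sm S f \<longleftrightarrow> (\<forall>x\<in>S. \<forall>y\<in>S. f (x + y) = f x + f y) \<and>
     (\<forall>a. \<forall>x\<in>S. f (sm a x) = sm a (f x))"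

definition Ck :: "(nat \<Rightarrow> nat \<Rightarrow> 'm::zero set) \<Rightarrow> nat \<Rightarrow> (nat \<Rightarrow> 'm) set" where
  "Ck C k = {\<eta>. (\<forall>p\<le>k. \<eta> p \<in> C p (k - p)) \<and> (\<forall>p>k. \<eta> p = 0)}"

definition Dtot :: "(nat \<Rightarrow> nat \<Rightarrow> 'm \<Rightarrow> 'm) \<Rightarrow> (nat \<Rightarrow> nat \<Rightarrow> 'm \<Rightarrow> 'm) \<Rightarrow>
    (nat \<Rightarrow> nat \<Rightarrow> 'm \<Rightarrow> 'm) \<Rightarrow> nat \<Rightarrow> (nat \<Rightarrow> 'm::ab_group_add) \<Rightarrow> nat \<Rightarrow> 'm" where
  "Dtot d21 d10 d01 k \<eta> = (\<lambda>p. if p \<le> k + 1 then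
      (if 2 \<le> p then d21 (p - 2) (k + 2 - p) (\<eta> (p - 2)) else 0)
    + (if 1 \<le> p then d10 (p - 1) (k + 1 - p) (\<eta> (p - 1)) else 0)
    + (if p \<le> k then d01 p (k - p) (\<eta> p) else 0)
    else 0)"

definition bigraded_complex :: "('r::ring_1 \<Rightarrow> 'm::ab_group_add \<Rightarrow> 'm) \<Rightarrow> (nat \<Rightarrow> nat \<Rightarrow> 'm set) \<Rightarrow>
    (nat \<Rightarrow> nat \<Rightarrow> 'm \<Rightarrow> 'm) \<Rightarrow> (nat \<Rightarrow> nat \<Rightarrow> 'm \<Rightarrow> 'm) \<Rightarrow> (nat \<Rightarrow> nat \<Rightarrow> 'm \<Rightarrow> 'm) \<Rightarrow> bool" where
  "bigraded_complex sm C d21 d10 d01 \<longleftrightarrow>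
     lmodule sm \<and> (\<forall>p q. submodule sm (C p q)) \<and>
     (\<forall>p q. linear_on sm (C p q) (d21 p q) \<and> linear_on sm (C p q) (d10 p q)
            \<and> linear_on sm (C p q) (d01 p q)) \<and>
     (\<forall>p q. \<forall>x\<in>C p q. d21 p q x \<in> (if q = 0 then {0} else C (p + 2) (q - 1))) \<and>
     (\<forall>p q. \<forall>x\<in>C p q. d10 p q x \<in> C (p + 1) q) \<and>
     (\<forall>p q. \<forall>x\<in>C p q. d01 p q x \<in> C p (q + 1)) \<and>
     (\<forall>k. \<forall>\<eta>\<in>Ck C k. Dtot d21 d10 d01 (k + 1) (Dtot d21 d10 d01 k \<eta>) = (\<lambda>_. 0))"

text \<open>Projection pi_1 onto G^1 C (components with q >= 1, i.e. p < k) in degree k.\<close>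
definition pi1 :: "nat \<Rightarrow> (nat \<Rightarrow> 'm::zero) \<Rightarrow> nat \<Rightarrow> 'm" where
  "pi1 k \<eta> = (\<lambda>p. if p < k then \<eta> p else 0)"

definition single :: "nat \<Rightarrow> 'm::zero \<Rightarrow> nat \<Rightarrow> 'm" where
  "single p x = (\<lambda>i. if i = p then x else 0)"

definition fadd :: "(nat \<Rightarrow> 'm::plus) \<Rightarrow> (nat \<Rightarrow> 'm) \<Rightarrow> nat \<Rightarrow> 'm" where
  "fadd f g = (\<lambda>i. f i + g i)"

definition fsm :: "('r \<Rightarrow> 'm \<Rightarrow> 'm) \<Rightarrow> 'r \<Rightarrow> (nat \<Rightarrow> 'm) \<Rightarrow> nat \<Rightarrow> 'm" where
  "fsm sm a f = (\<lambda>i. sm a (f i))"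

definition Ak where
  "Ak C d21 d10 d01 k = pi1 k ` {\<eta> \<in> Ck C k. pi1 (k + 1) (Dtot d21 d10 d01 k \<eta>) = (\<lambda>_. 0)}"

definition Npq where
  "Npq C d21 d01 p q = {x \<in> C p q. d01 p q x = 0 \<and> d21 p q x = 0}"

text \<open>Degree-m part of the subcomplex N_j, namely N^{m-j,j}, as a subset of C^m.\<close>
definition NN where
  "NN C d21 d01 j m = (if j \<le> m then single (m - j) ` Npq C d21 d01 (m - j) j else {\<lambda>_. 0})"

text \<open>Coboundaries B^{k+1}(N_j, dbar) with dbar the restriction of the total differential.\<close>
definition BN where
  "BN C d21 d10 d01 j k = Dtot d21 d10 d01 k ` NN C d21 d01 j k"

definition ZN where
  "ZN C d21 d10 d01 j m = {\<zeta> \<in> NN C d21 d01 j m. Dtot d21 d10 d01 m \<zeta> = (\<lambda>_. 0)}"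

text \<open>Cohomology class in H^{k+1}(N_0, dbar) of a (k+1)-cochain, as a coset.\<close>
definition cls where
  "cls C d21 d10 d01 k z = fadd z ` BN C d21 d10 d01 0 k"

definition H0 where
  "H0 C d21 d10 d01 k = cls C d21 d10 d01 k ` ZN C d21 d10 d01 0 (k + 1)"

definition Mk where
  "Mk C d21 d10 d01 k = {\<eta> \<in> Ck C k. \<forall>i \<le> k + 1.
      single i (Dtot d21 d10 d01 k \<eta> i) \<in> BN C d21 d10 d01 (k + 1 - i) k}"

definition Z1 where
  "Z1 C d21 d10 d01 k = pi1 k ` {\<eta> \<in> Mk C d21 d10 d01 k. pi1 (k + 1) (Dtot d21 d10 d01 k \<eta>) = (\<lambda>_. 0)}"

text \<open>The representative d21 xi_{k-1,1} + d10 eta_{k,0}, placed in bidegree (k+1,0);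
  xi_{-1,1} = 0 when k = 0.\<close>
definition rho_rep where
  "rho_rep d21 d10 k \<xi> \<eta> =
     single (k + 1) ((if 1 \<le> k then d21 (k - 1) 1 (\<xi> (k - 1)) else 0) + d10 k 0 (\<eta> k))"

end

theory Submission
  imports Defs
begin

text \<open>
  If pi_1(D eta) = 0 then D eta is concentrated in bidegree (k+1,0), where it equals
  d21 xi_{k-1,1} + d10 eta_{k,0}; since d21 vanishes on C^{p,0} and D(D eta) = 0, it is a
  cocycle of N_0.  Two such eta with the same pi_1-image differ by some delta in C^{k,0}
  whose d01 delta is the (k,0)-component of D eta - D eta' = 0, so delta lies in N^{k,0} and
  D delta is a coboundary of N_0: the class of D eta depends only on xi = pi_1 eta, and rho_k
  is linear because D is.  Finally, all components of D eta other than the (k+1,0) one vanish,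
  so eta in M^k reduces to D eta in B^{k+1}(N_0), which says exactly that rho_k(xi) = 0.
\<close>

locale bigraded_cochain_complex =
  fixes sm :: "'r::ring_1 \<Rightarrow> 'm::ab_group_add \<Rightarrow> 'm"
    and C :: "nat \<Rightarrow> nat \<Rightarrow> 'm set"
    and d21 d10 d01 :: "nat \<Rightarrow> nat \<Rightarrow> 'm \<Rightarrow> 'm"
  assumes complex: "bigraded_complex sm C d21 d10 d01"
begin

abbreviation D where "D \<equiv> Dtot d21 d10 d01"

lemma lmodule: "lmodule sm"
  using complex by (simp add: bigraded_complex_def)

lemma sm_add: "sm a (x + y) = sm a x + sm a y"
  using lmodule by (simp add: lmodule_def)

lemma sm_zero [simp]: "sm a 0 = 0"
  using sm_add[of a 0 0] by simp

lemma sm_minus_one: "sm (- 1) x = - x"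
proof -
  have sm_add_left: "sm (a + b) x = sm a x + sm b x" for a b
    using lmodule by (simp add: lmodule_def)
  have "sm 0 x = 0"
    using sm_add_left[of 0 0] by simp
  then have "sm 1 x + sm (- 1) x = 0"
    using sm_add_left[of 1 "- 1"] by simp
  then show ?thesis
    using lmodule by (simp add: lmodule_def eq_neg_iff_add_eq_0 add.commute)
qed

lemma submodule_C: "submodule sm (C p q)"
  using complex by (simp add: bigraded_complex_def)

lemma zero_C [simp]: "0 \<in> C p q"
  and add_C: "x \<in> C p q \<Longrightarrow> y \<in> C p q \<Longrightarrow> x + y \<in> C p q"
  and uminus_C: "x \<in> C p q \<Longrightarrow> - x \<in> C p q"
  and sm_C: "x \<in> C p q \<Longrightarrow> sm a x \<in> C p q"
  using submodule_C unfolding submodule_def by blast+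

lemma diff_C: "x \<in> C p q \<Longrightarrow> y \<in> C p q \<Longrightarrow> x - y \<in> C p q"
  unfolding diff_conv_add_uminus by (intro add_C uminus_C)

lemma linear_d: "linear_on sm (C p q) (d21 p q)" "linear_on sm (C p q) (d10 p q)"
    "linear_on sm (C p q) (d01 p q)"
  using complex by (simp_all add: bigraded_complex_def)

lemma d21_add: "x \<in> C p q \<Longrightarrow> y \<in> C p q \<Longrightarrow> d21 p q (x + y) = d21 p q x + d21 p q y"
  and d10_add: "x \<in> C p q \<Longrightarrow> y \<in> C p q \<Longrightarrow> d10 p q (x + y) = d10 p q x + d10 p q y"
  and d01_add: "x \<in> C p q \<Longrightarrow> y \<in> C p q \<Longrightarrow> d01 p q (x + y) = d01 p q x + d01 p q y"
  and d21_sm: "x \<in> C p q \<Longrightarrow> d21 p q (sm a x) = sm a (d21 p q x)"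
  and d10_sm: "x \<in> C p q \<Longrightarrow> d10 p q (sm a x) = sm a (d10 p q x)"
  and d01_sm: "x \<in> C p q \<Longrightarrow> d01 p q (sm a x) = sm a (d01 p q x)"
  using linear_d unfolding linear_on_def by blast+

lemma d21_zero [simp]: "d21 p q 0 = 0"
  and d10_zero [simp]: "d10 p q 0 = 0"
  and d01_zero [simp]: "d01 p q 0 = 0"
  using d21_add[OF zero_C zero_C] d10_add[OF zero_C zero_C] d01_add[OF zero_C zero_C] by simp_all

lemma d21_C: "x \<in> C p (Suc q) \<Longrightarrow> d21 p (Suc q) x \<in> C (p + 2) q"
  and d21_bottom: "x \<in> C p 0 \<Longrightarrow> d21 p 0 x = 0"
  and d10_C: "x \<in> C p q \<Longrightarrow> d10 p q x \<in> C (p + 1) q"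
  using complex unfolding bigraded_complex_def by fastforce+

lemma Dtot_Dtot: "\<eta> \<in> Ck C k \<Longrightarrow> D (k + 1) (D k \<eta>) = (\<lambda>_. 0)"
  using complex by (simp add: bigraded_complex_def)

text \<open>The bidegree is a separate premise so that the simplifier can match \<open>C p q\<close> up to
  arithmetic on \<open>q\<close>.\<close>

lemma Ck_component: "\<eta> \<in> Ck C k \<Longrightarrow> q = k - p \<Longrightarrow> \<eta> p \<in> C p q"
  by (cases "p \<le> k") (simp_all add: Ck_def)

lemma Ck_above: "\<eta> \<in> Ck C k \<Longrightarrow> k < p \<Longrightarrow> \<eta> p = 0"
  by (simp add: Ck_def)

lemma nat_cases_012:
  obtains "p = 0" | "p = Suc 0" | j where "p = Suc (Suc j)"
  by (metis not0_implies_Suc)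

lemma Dtot_fadd:
  assumes "f \<in> Ck C k" "g \<in> Ck C k"
  shows "D k (fadd f g) = fadd (D k f) (D k g)"
proof
  fix p
  show "D k (fadd f g) p = fadd (D k f) (D k g) p"
    by (cases p rule: nat_cases_012)
      (simp_all add: Dtot_def fadd_def d21_add d10_add d01_add Ck_component[OF assms(1)]
        Ck_component[OF assms(2)])
qed

lemma Dtot_fsm:
  assumes "f \<in> Ck C k"
  shows "D k (fsm sm a f) = fsm sm a (D k f)"
proof
  fix p
  show "D k (fsm sm a f) p = fsm sm a (D k f) p"
    by (cases p rule: nat_cases_012)
      (simp_all add: Dtot_def fsm_def d21_sm d10_sm d01_sm sm_add Ck_component[OF assms])
qed

lemma Ck_fadd: "f \<in> Ck C k \<Longrightarrow> g \<in> Ck C k \<Longrightarrow> fadd f g \<in> Ck C k"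
  and Ck_fsm: "f \<in> Ck C k \<Longrightarrow> fsm sm a f \<in> Ck C k"
  and Ck_diff: "f \<in> Ck C k \<Longrightarrow> g \<in> Ck C k \<Longrightarrow> (\<lambda>p. f p - g p) \<in> Ck C k"
  by (simp_all add: Ck_def fadd_def fsm_def add_C sm_C diff_C)

lemma Dtot_diff:
  assumes "f \<in> Ck C k" "g \<in> Ck C k"
  shows "D k (\<lambda>p. f p - g p) = (\<lambda>p. D k f p - D k g p)"
proof -
  have "fadd g (\<lambda>p. f p - g p) = f"
    by (simp add: fadd_def)
  then have "D k f = fadd (D k g) (D k (\<lambda>p. f p - g p))"
    using Dtot_fadd[OF assms(2) Ck_diff[OF assms]] by simp
  then show ?thesis
    by (simp add: fadd_def fun_eq_iff)
qed

lemma single_zero [simp]: "single p 0 = (\<lambda>_. 0)"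
  and fadd_single: "fadd (single p x) (single p y) = single p (x + y)"
  and fsm_single: "fsm sm a (single p x) = single p (sm a x)"
  by (simp_all add: single_def fadd_def fsm_def fun_eq_iff)

lemma fadd_zero_left [simp]: "fadd (\<lambda>_. 0) f = (f :: nat \<Rightarrow> 'm)"
  and fadd_zero_right [simp]: "fadd f (\<lambda>_. 0) = (f :: nat \<Rightarrow> 'm)"
  and fsm_zero [simp]: "fsm sm a (\<lambda>_. 0) = (\<lambda>_. 0)"
  by (simp_all add: fadd_def fsm_def)

lemma Dtot_zero [simp]: "D k (\<lambda>_. 0) = (\<lambda>_. 0)"
  by (simp add: Dtot_def fun_eq_iff)

lemma Dtot_single_same: "p \<le> k \<Longrightarrow> D k (single p x) p = d01 p (k - p) x"
  by (cases p rule: nat_cases_012) (simp_all add: Dtot_def single_def)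

lemma Dtot_top:
  "D k f (k + 1) = (if 1 \<le> k then d21 (k - 1) 1 (f (k - 1)) else 0) + d10 k 0 (f k)"
  by (cases k) (simp_all add: Dtot_def)

lemma zero_Npq [simp]: "0 \<in> Npq C d21 d01 p q"
  and add_Npq:
    "x \<in> Npq C d21 d01 p q \<Longrightarrow> y \<in> Npq C d21 d01 p q \<Longrightarrow> x + y \<in> Npq C d21 d01 p q"
  and sm_Npq: "x \<in> Npq C d21 d01 p q \<Longrightarrow> sm a x \<in> Npq C d21 d01 p q"
  by (simp_all add: Npq_def add_C sm_C d01_add d21_add d01_sm d21_sm)

lemma NN_subset_Ck: "\<zeta> \<in> NN C d21 d01 j k \<Longrightarrow> \<zeta> \<in> Ck C k"
  by (auto simp: NN_def Npq_def Ck_def single_def split: if_splits)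

lemma zero_NN [simp]: "(\<lambda>_. 0) \<in> NN C d21 d01 j k"
  by (simp add: NN_def rev_image_eqI[OF zero_Npq])

lemma NN_fadd:
    "\<zeta> \<in> NN C d21 d01 j k \<Longrightarrow> \<zeta>' \<in> NN C d21 d01 j k \<Longrightarrow> fadd \<zeta> \<zeta>' \<in> NN C d21 d01 j k"
  and NN_fsm: "\<zeta> \<in> NN C d21 d01 j k \<Longrightarrow> fsm sm a \<zeta> \<in> NN C d21 d01 j k"
  by (auto simp: NN_def fadd_single fsm_single split: if_splits intro!: imageI add_Npq sm_Npq)

lemma zero_BN [simp]: "(\<lambda>_. 0) \<in> BN C d21 d10 d01 j k"
  by (simp add: BN_def rev_image_eqI[OF zero_NN])

lemma BN_fadd:
  assumes "b \<in> BN C d21 d10 d01 j k" "b' \<in> BN C d21 d10 d01 j k"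
  shows "fadd b b' \<in> BN C d21 d10 d01 j k"
proof -
  obtain \<zeta> \<zeta>' where "\<zeta> \<in> NN C d21 d01 j k" "\<zeta>' \<in> NN C d21 d01 j k" "b = D k \<zeta>" "b' = D k \<zeta>'"
    using assms by (auto simp: BN_def)
  moreover from this have "fadd b b' = D k (fadd \<zeta> \<zeta>')"
    by (simp add: Dtot_fadd NN_subset_Ck)
  ultimately show ?thesis
    by (simp add: BN_def rev_image_eqI[OF NN_fadd])
qed

lemma BN_fsm:
  assumes "b \<in> BN C d21 d10 d01 j k"
  shows "fsm sm a b \<in> BN C d21 d10 d01 j k"
proof -
  obtain \<zeta> where "\<zeta> \<in> NN C d21 d01 j k" "b = D k \<zeta>"
    using assms by (auto simp: BN_def)
  moreover from this have "fsm sm a b = D k (fsm sm a \<zeta>)"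
    by (simp add: Dtot_fsm NN_subset_Ck)
  ultimately show ?thesis
    by (simp add: BN_def rev_image_eqI[OF NN_fsm])
qed

lemma BN_uminus: "b \<in> BN C d21 d10 d01 j k \<Longrightarrow> (\<lambda>p. - b p) \<in> BN C d21 d10 d01 j k"
  using BN_fsm[of b j k "- 1"] by (simp add: fsm_def sm_minus_one)

lemma cls_fadd_BN:
  assumes c: "c \<in> BN C d21 d10 d01 0 k"
  shows "cls C d21 d10 d01 k (fadd w c) = cls C d21 d10 d01 k w"
  unfolding cls_def
proof (intro equalityI image_subsetI)
  fix b assume b: "b \<in> BN C d21 d10 d01 0 k"
  show "fadd (fadd w c) b \<in> fadd w ` BN C d21 d10 d01 0 k"
    by (rule rev_image_eqI[OF BN_fadd[OF c b]]) (simp add: fadd_def add.assoc)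
  show "fadd w b \<in> fadd (fadd w c) ` BN C d21 d10 d01 0 k"
    by (rule rev_image_eqI[OF BN_fadd[OF BN_uminus[OF c] b]]) (simp add: fadd_def)
qed

lemma cls_eq_zero_iff:
  "cls C d21 d10 d01 k w = cls C d21 d10 d01 k (\<lambda>_. 0) \<longleftrightarrow> w \<in> BN C d21 d10 d01 0 k"
proof
  have "w \<in> cls C d21 d10 d01 k w"
    by (simp add: cls_def rev_image_eqI[OF zero_BN])
  also assume "cls C d21 d10 d01 k w = cls C d21 d10 d01 k (\<lambda>_. 0)"
  finally show "w \<in> BN C d21 d10 d01 0 k"
    by (simp add: cls_def)
qed (metis cls_fadd_BN fadd_zero_left)

lemma cls_lincomb:
  assumes "z \<in> cls C d21 d10 d01 k w" "z' \<in> cls C d21 d10 d01 k w'"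
  shows "cls C d21 d10 d01 k (fadd (fsm sm a z) (fsm sm b z'))
    = cls C d21 d10 d01 k (fadd (fsm sm a w) (fsm sm b w'))"
proof -
  obtain c c' where c: "c \<in> BN C d21 d10 d01 0 k" "c' \<in> BN C d21 d10 d01 0 k"
    and z: "z = fadd w c" "z' = fadd w' c'"
    using assms by (auto simp: cls_def)
  have "fadd (fsm sm a z) (fsm sm b z')
      = fadd (fadd (fsm sm a w) (fsm sm b w')) (fadd (fsm sm a c) (fsm sm b c'))"
    by (simp add: z fadd_def fsm_def sm_add algebra_simps)
  then show ?thesis
    using c by (simp add: cls_fadd_BN BN_fadd BN_fsm)
qed

lemma pi1_fadd: "pi1 k (fadd f g) = fadd (pi1 k f) (pi1 k g)"
  and pi1_fsm: "pi1 k (fsm sm a f) = fsm sm a (pi1 k f)"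
  by (simp_all add: pi1_def fadd_def fsm_def fun_eq_iff)

lemma Dtot_top_C: "\<eta> \<in> Ck C k \<Longrightarrow> D k \<eta> (k + 1) \<in> C (k + 1) 0"
  unfolding Dtot_top
  by (cases k) (auto simp: Ck_component intro!: add_C d10_C[simplified] d21_C[simplified])

definition pi1_closed :: "nat \<Rightarrow> (nat \<Rightarrow> 'm) set" where
  "pi1_closed k = {\<eta> \<in> Ck C k. pi1 (k + 1) (D k \<eta>) = (\<lambda>_. 0)}"

lemma Ak_eq_image_pi1_closed: "Ak C d21 d10 d01 k = pi1 k ` pi1_closed k"
  by (simp add: Ak_def pi1_closed_def)

lemma Z1_eq_image_pi1_closed_Mk:
  "Z1 C d21 d10 d01 k = pi1 k ` (pi1_closed k \<inter> Mk C d21 d10 d01 k)"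
  unfolding Z1_def pi1_closed_def Mk_def by (rule arg_cong[where f = "image (pi1 k)"]) blast

lemma pi1_closed_Ck: "\<eta> \<in> pi1_closed k \<Longrightarrow> \<eta> \<in> Ck C k"
  by (simp add: pi1_closed_def)

lemma pi1_closed_Dtot_below:
  assumes "\<eta> \<in> pi1_closed k" "p \<le> k"
  shows "D k \<eta> p = 0"
proof -
  have "pi1 (k + 1) (D k \<eta>) p = 0"
    using assms(1) by (simp add: pi1_closed_def)
  then show ?thesis
    using assms(2) by (simp add: pi1_def)
qed

lemma pi1_closed_Dtot_eq_single:
  assumes "\<eta> \<in> pi1_closed k"
  shows "D k \<eta> = single (k + 1) (D k \<eta> (k + 1))"
proof
  fix p
  show "D k \<eta> p = single (k + 1) (D k \<eta> (k + 1)) p"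
    using pi1_closed_Dtot_below[OF assms, of p] by (auto simp: single_def Dtot_def)
qed

lemma pi1_closed_lincomb:
  assumes "\<eta> \<in> pi1_closed k" "\<eta>' \<in> pi1_closed k"
  shows "fadd (fsm sm a \<eta>) (fsm sm b \<eta>') \<in> pi1_closed k"
  using assms by (simp add: pi1_closed_def Ck_fadd Ck_fsm Dtot_fadd Dtot_fsm pi1_fadd pi1_fsm)

lemma rho_rep_eq_Dtot:
  assumes "\<eta> \<in> pi1_closed k"
  shows "rho_rep d21 d10 k (pi1 k \<eta>) \<eta> = D k \<eta>"
proof -
  have "rho_rep d21 d10 k (pi1 k \<eta>) \<eta> = single (k + 1) (D k \<eta> (k + 1))"
    unfolding rho_rep_def Dtot_top by (simp add: pi1_def)
  also have "\<dots> = D k \<eta>"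
    by (rule pi1_closed_Dtot_eq_single[OF assms, symmetric])
  finally show ?thesis .
qed

lemma Dtot_pi1_closed_ZN:
  assumes "\<eta> \<in> pi1_closed k"
  shows "D k \<eta> \<in> ZN C d21 d10 d01 0 (k + 1)"
proof -
  define x where "x = D k \<eta> (k + 1)"
  have concentrated: "D k \<eta> = single (k + 1) x"
    unfolding x_def by (rule pi1_closed_Dtot_eq_single[OF assms])
  have x: "x \<in> C (k + 1) 0"
    unfolding x_def by (rule Dtot_top_C[OF pi1_closed_Ck[OF assms]])
  have DD: "D (k + 1) (D k \<eta>) = (\<lambda>_. 0)"
    by (rule Dtot_Dtot[OF pi1_closed_Ck[OF assms]])
  then have "d01 (k + 1) 0 x = 0"
    using Dtot_single_same[of "k + 1" "k + 1" x] by (simp add: concentrated)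
  with x have "x \<in> Npq C d21 d01 (k + 1) 0"
    by (simp add: Npq_def d21_bottom)
  with DD show ?thesis
    by (simp add: ZN_def NN_def concentrated)
qed

lemma pi1_closed_diff_NN:
  assumes "\<eta> \<in> pi1_closed k" "\<eta>' \<in> pi1_closed k" "pi1 k \<eta> = pi1 k \<eta>'"
  shows "(\<lambda>p. \<eta> p - \<eta>' p) \<in> NN C d21 d01 0 k"
proof -
  define \<delta> where "\<delta> = (\<lambda>p. \<eta> p - \<eta>' p)"
  have Ck: "\<delta> \<in> Ck C k"
    unfolding \<delta>_def by (intro Ck_diff pi1_closed_Ck assms)
  have concentrated: "\<delta> = single k (\<delta> k)"
  proof
    fix p
    have "\<eta> p = \<eta>' p" if "p < k"
      using fun_cong[OF assms(3), of p] that by (simp add: pi1_def)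
    then show "\<delta> p = single k (\<delta> k) p"
      using Ck_above[OF Ck, of p]
      by (cases p k rule: linorder_cases) (auto simp: single_def \<delta>_def)
  qed
  have "D k \<delta> k = 0"
    using pi1_closed_Dtot_below[OF assms(1), of k] pi1_closed_Dtot_below[OF assms(2), of k]
    by (simp add: \<delta>_def Dtot_diff pi1_closed_Ck assms)
  then have "d01 k 0 (\<delta> k) = 0"
    using Dtot_single_same[of k k "\<delta> k"] concentrated by simp
  moreover have "\<delta> k \<in> C k 0"
    using Ck_component[OF Ck, of 0 k] by simp
  ultimately have "\<delta> k \<in> Npq C d21 d01 k 0"
    by (simp add: Npq_def d21_bottom)
  then show ?thesis
    unfolding \<delta>_def[symmetric] by (subst concentrated) (simp add: NN_def)
qed

lemma cls_Dtot_eq: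
  assumes "\<eta> \<in> pi1_closed k" "\<eta>' \<in> pi1_closed k" "pi1 k \<eta> = pi1 k \<eta>'"
  shows "cls C d21 d10 d01 k (D k \<eta>) = cls C d21 d10 d01 k (D k \<eta>')"
proof -
  let ?\<delta> = "\<lambda>p. \<eta> p - \<eta>' p"
  have "D k \<eta> = fadd (D k \<eta>') (D k ?\<delta>)"
    using assms(1,2) by (simp add: Dtot_diff pi1_closed_Ck fadd_def)
  moreover have "D k ?\<delta> \<in> BN C d21 d10 d01 0 k"
    unfolding BN_def using pi1_closed_diff_NN[OF assms] by (rule imageI)
  ultimately show ?thesis
    by (simp add: cls_fadd_BN)
qed

text \<open>Off \<open>Ak\<close> the choice below is unconstrained; on \<open>Ak\<close> its value does not depend on it
  (\<open>rho_pi1\<close>).\<close>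

definition rho :: "nat \<Rightarrow> (nat \<Rightarrow> 'm) \<Rightarrow> (nat \<Rightarrow> 'm) set" where
  "rho k \<xi> = cls C d21 d10 d01 k (D k (SOME \<eta>. \<eta> \<in> pi1_closed k \<and> pi1 k \<eta> = \<xi>))"

lemma rho_pi1:
  assumes "\<eta> \<in> pi1_closed k"
  shows "rho k (pi1 k \<eta>) = cls C d21 d10 d01 k (D k \<eta>)"
proof -
  let ?\<eta>' = "SOME \<eta>'. \<eta>' \<in> pi1_closed k \<and> pi1 k \<eta>' = pi1 k \<eta>"
  have "?\<eta>' \<in> pi1_closed k \<and> pi1 k ?\<eta>' = pi1 k \<eta>"
    by (rule someI[where x = \<eta>]) (simp add: assms)
  then show ?thesis
    unfolding rho_def using cls_Dtot_eq[of ?\<eta>' k \<eta>] assms by simp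
qed

lemma rho_in_H0:
  assumes "\<xi> \<in> Ak C d21 d10 d01 k"
  shows "rho k \<xi> \<in> H0 C d21 d10 d01 k"
proof -
  obtain \<eta> where "\<eta> \<in> pi1_closed k" "\<xi> = pi1 k \<eta>"
    using assms by (auto simp: Ak_eq_image_pi1_closed)
  then show ?thesis
    unfolding H0_def using imageI[OF Dtot_pi1_closed_ZN] by (simp add: rho_pi1)
qed

lemma rho_lincomb:
  assumes "\<xi> \<in> Ak C d21 d10 d01 k" "\<xi>' \<in> Ak C d21 d10 d01 k"
    and "z \<in> rho k \<xi>" "z' \<in> rho k \<xi>'"
  shows "rho k (fadd (fsm sm a \<xi>) (fsm sm b \<xi>'))
    = cls C d21 d10 d01 k (fadd (fsm sm a z) (fsm sm b z'))"
proof -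
  obtain \<eta> \<eta>' where \<eta>: "\<eta> \<in> pi1_closed k" "\<xi> = pi1 k \<eta>"
    and \<eta>': "\<eta>' \<in> pi1_closed k" "\<xi>' = pi1 k \<eta>'"
    using assms(1,2) by (auto simp: Ak_eq_image_pi1_closed)
  have "rho k (fadd (fsm sm a \<xi>) (fsm sm b \<xi>'))
      = cls C d21 d10 d01 k (D k (fadd (fsm sm a \<eta>) (fsm sm b \<eta>')))"
    using rho_pi1[OF pi1_closed_lincomb[OF \<eta>(1) \<eta>'(1)]]
    by (simp add: \<eta> \<eta>' pi1_fadd pi1_fsm)
  also have "\<dots> = cls C d21 d10 d01 k (fadd (fsm sm a (D k \<eta>)) (fsm sm b (D k \<eta>')))"
    using \<eta> \<eta>' by (simp add: Dtot_fadd Dtot_fsm Ck_fsm pi1_closed_Ck)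
  also have "\<dots> = cls C d21 d10 d01 k (fadd (fsm sm a z) (fsm sm b z'))"
    using assms(3,4) by (simp add: \<eta> \<eta>' rho_pi1 cls_lincomb)
  finally show ?thesis .
qed

lemma pi1_closed_Mk_iff:
  assumes "\<eta> \<in> pi1_closed k"
  shows "\<eta> \<in> Mk C d21 d10 d01 k \<longleftrightarrow> D k \<eta> \<in> BN C d21 d10 d01 0 k"
proof -
  have "single i (D k \<eta> i) \<in> BN C d21 d10 d01 (k + 1 - i) k" if "i \<le> k" for i
    using pi1_closed_Dtot_below[OF assms that] by simp
  then have "\<eta> \<in> Mk C d21 d10 d01 k
      \<longleftrightarrow> single (k + 1) (D k \<eta> (k + 1)) \<in> BN C d21 d10 d01 0 k"
    using pi1_closed_Ck[OF assms] by (auto simp: Mk_def le_Suc_eq)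
  then show ?thesis
    using pi1_closed_Dtot_eq_single[OF assms] by simp
qed

lemma Z1_eq_ker_rho:
  "Z1 C d21 d10 d01 k = {\<xi> \<in> Ak C d21 d10 d01 k. rho k \<xi> = cls C d21 d10 d01 k (\<lambda>_. 0)}"
proof -
  have "rho k (pi1 k \<eta>) = cls C d21 d10 d01 k (\<lambda>_. 0) \<longleftrightarrow> \<eta> \<in> Mk C d21 d10 d01 k"
    if "\<eta> \<in> pi1_closed k" for \<eta>
    using that by (simp add: rho_pi1 cls_eq_zero_iff pi1_closed_Mk_iff)
  then have "pi1_closed k \<inter> Mk C d21 d10 d01 k
      = {\<eta> \<in> pi1_closed k. rho k (pi1 k \<eta>) = cls C d21 d10 d01 k (\<lambda>_. 0)}"
    by blast
  then show ?thesis
    unfolding Z1_eq_image_pi1_closed_Mk Ak_eq_image_pi1_closed by blast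
qed

end

theorem lemma5p2:
  fixes sm :: "'r::ring_1 \<Rightarrow> 'm::ab_group_add \<Rightarrow> 'm"
    and C :: "nat \<Rightarrow> nat \<Rightarrow> 'm set"
    and d21 d10 d01 :: "nat \<Rightarrow> nat \<Rightarrow> 'm \<Rightarrow> 'm"
    and k :: nat
  assumes "bigraded_complex sm C d21 d10 d01"
  shows "\<exists>\<rho>.
     (\<forall>\<xi>\<in>Ak C d21 d10 d01 k. \<rho> \<xi> \<in> H0 C d21 d10 d01 k) \<and>
     (\<forall>\<eta>\<in>Ck C k. pi1 (k + 1) (Dtot d21 d10 d01 k \<eta>) = (\<lambda>_. 0) \<longrightarrow>
        \<rho> (pi1 k \<eta>) = cls C d21 d10 d01 k (rho_rep d21 d10 k (pi1 k \<eta>) \<eta>)) \<and>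
     (\<forall>a b \<xi> \<xi>' z z'. \<xi> \<in> Ak C d21 d10 d01 k \<longrightarrow> \<xi>' \<in> Ak C d21 d10 d01 k \<longrightarrow>
        z \<in> \<rho> \<xi> \<longrightarrow> z' \<in> \<rho> \<xi>' \<longrightarrow>
        \<rho> (fadd (fsm sm a \<xi>) (fsm sm b \<xi>')) = cls C d21 d10 d01 k (fadd (fsm sm a z) (fsm sm b z'))) \<and>
     Z1 C d21 d10 d01 k = {\<xi> \<in> Ak C d21 d10 d01 k. \<rho> \<xi> = cls C d21 d10 d01 k (\<lambda>_. 0)}"
proof -
  interpret bigraded_cochain_complex sm C d21 d10 d01
    by unfold_locales (rule assms)
  show ?thesis
  proof (intro exI[of _ "rho k"] conjI ballI allI impI)
    show "rho k \<xi> \<in> H0 C d21 d10 d01 k" if "\<xi> \<in> Ak C d21 d10 d01 k" for \<xi>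
      using that by (rule rho_in_H0)
    show "rho k (pi1 k \<eta>) = cls C d21 d10 d01 k (rho_rep d21 d10 k (pi1 k \<eta>) \<eta>)"
      if "\<eta> \<in> Ck C k" "pi1 (k + 1) (D k \<eta>) = (\<lambda>_. 0)" for \<eta>
      using that by (simp add: pi1_closed_def rho_pi1 rho_rep_eq_Dtot)
  qed (simp_all add: rho_lincomb Z1_eq_ker_rho)
qed

end
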